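(* Let $S\subset\mathbb R^2$ be nonempty, compact and symmetric ($S=-S$). Consider the zero-sum game in which both players choose points of $S$ and Player II receives $K$ from Player I, with mixed strategies being Borel probability measures on $S$ and $K(F_1,F_2)=\int_S\int_S K(\mathbf a,\mathbf b)\,dF_1(\mathbf a)\,dF_2(\mathbf b)$. Then this game has a value and the value is $0$, i.e. $\inf_{F_1}\sup_{F_2}K(F_1,F_2)=\sup_{F_2}\inf_{F_1}K(F_1,F_2)=0$.
   Context: Standing setup. Fix $\sigma_x,\sigma_y>0$ and $\rho\in(-1,1)$, and let $(\xi,\eta)$ be a bivariate normal random vector with mean $(0,0)$ and covariance matrix $\Sigma=\begin{pmatrix}\sigma_x^2&\rho\sigma_x\sigma_y\\ \rho\sigma_x\sigma_y&\sigma_y^2\end{pmatrix}$. Player I (the minimizer) chooses $\mathbf a=(x_1,y_1)\in\mathbb R^2$ and Player II (the maximizer) chooses $\mathbf b=(x_2,y_2)\in\mathbb R^2$. Let $C_1(\mathbf a,\mathbf b)=\{(x,y):(x_1-x)^2+(y_1-y)^2<(x_2-x)^2+(y_2-y)^2\}$ and $C_2(\mathbf a,\mathbf b)=\{(x,y):(x_1-x)^2+(y_1-y)^2>(x_2-x)^2+(y_2-y)^2\}$. The payoff to Player II (paid by Player I) is $K(\mathbf a,\mathbf b)=x_1+y_1$ if $\mathbf a=\mathbf b$, and $K(\mathbf a,\mathbf b)=(x_1+y_1)\,P((\xi,\eta)\in C_1(\mathbf a,\mathbf b))+(x_2+y_2)\,P((\xi,\eta)\in C_2(\mathbf a,\mathbf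 b))$ if $\mathbf a\neq\mathbf b$. For $\mathbf a=(x,y)$ write $-\mathbf a=(-x,-y)$. *)

theory Defs
  imports "HOL-Probability.Probability"
begin

definition binorm_density :: "real \<Rightarrow> real \<Rightarrow> real \<Rightarrow> real \<times> real \<Rightarrow> real" where
  "binorm_density sx sy r = (\<lambda>(x, y).
     exp (- (x\<^sup>2 / sx\<^sup>2 - 2 * r * x * y / (sx * sy) + y\<^sup>2 / sy\<^sup>2) / (2 * (1 - r\<^sup>2)))
     / (2 * pi * sx * sy * sqrt (1 - r\<^sup>2)))"

definition binorm :: "real \<Rightarrow> real \<Rightarrow> real \<Rightarrow> (real \<times> real) measure" where
  "binorm sx sy r = density lborel (\<lambda>z. ennreal (binorm_density sx sy r z))"

definition cell1 :: "real \<times> real \<Rightarrow> real \<times> real \<Rightarrow> (real \<times> real) set" where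
  "cell1 a b = {(x, y). (fst a - x)\<^sup>2 + (snd a - y)\<^sup>2 < (fst b - x)\<^sup>2 + (snd b - y)\<^sup>2}"

definition cell2 :: "real \<times> real \<Rightarrow> real \<times> real \<Rightarrow> (real \<times> real) set" where
  "cell2 a b = {(x, y). (fst a - x)\<^sup>2 + (snd a - y)\<^sup>2 > (fst b - x)\<^sup>2 + (snd b - y)\<^sup>2}"

text \<open>Payoff to Player II (maximizer); a is Player I's point, b is Player II's point.\<close>
definition payoff :: "real \<Rightarrow> real \<Rightarrow> real \<Rightarrow> real \<times> real \<Rightarrow> real \<times> real \<Rightarrow> real" where
  "payoff sx sy r a b =
     (if a = b then fst a + snd a
      else (fst a + snd a) * measure (binorm sx sy r) (cell1 a b)
         + (fst b + snd b) * measure (binorm sx sy r) (cell2 a b))"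

definition mixed_strategies :: "(real \<times> real) set \<Rightarrow> (real \<times> real) measure set" where
  "mixed_strategies S = {M. prob_space M \<and> sets M = sets (restrict_space borel S)}"

definition mixed_payoff :: "real \<Rightarrow> real \<Rightarrow> real \<Rightarrow> (real \<times> real) measure \<Rightarrow> (real \<times> real) measure \<Rightarrow> real" where
  "mixed_payoff sx sy r F1 F2 = (\<integral>b. (\<integral>a. payoff sx sy r a b \<partial>F1) \<partial>F2)"

end

theory Submission
  imports Defs
begin

text \<open>Reflecting both points through the origin swaps the two Voronoi cells, and the centred
  normal law is symmetric, so the kernel is skew: \<open>K(-b, -a) = -K(a, b)\<close>.  Hence the game
  is symmetric: answering a mixed strategy by its reflection yields payoff 0, and reflection
  turns \<open>\<epsilon>\<close>-optimal strategies of the minimizer into \<open>\<epsilon>\<close>-optimal ones of the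
  maximizer.  These exist because K is continuous (the cell probability jumps only where
  the points meet, and there its coefficient vanishes), hence uniformly continuous on
  \<open>S \<times> S\<close>: the finite skew game on a symmetric net of S has value 0 by the minimax
  theorem, and its optimal strategy is \<open>\<epsilon>\<close>-optimal on all of S.\<close>

section \<open>Finite matrix games\<close>

definition prob_vectors :: "'a set \<Rightarrow> ('a \<Rightarrow> real) set" where
  "prob_vectors I = {x. (\<forall>i. 0 \<le> x i) \<and> (\<forall>i. i \<notin> I \<longrightarrow> x i = 0) \<and> sum x I = 1}"

definition has_mixed_saddle :: "'a set \<Rightarrow> 'b set \<Rightarrow> ('a \<Rightarrow> 'b \<Rightarrow> real) \<Rightarrow> bool" where
  "has_mixed_saddle I J A \<longleftrightarrow> (\<exists>x\<in>prob_vectors I. \<exists>y\<in>prob_vectors J. \<exists>v.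
      (\<forall>j\<in>J. v \<le> (\<Sum>i\<in>I. x i * A i j)) \<and> (\<forall>i\<in>I. (\<Sum>j\<in>J. A i j * y j) \<le> v))"

lemma prob_vectors_le_1: "x \<in> prob_vectors I \<Longrightarrow> finite I \<Longrightarrow> x i \<le> 1"
  unfolding prob_vectors_def
  by (cases "i \<in> I") (auto intro: member_le_sum[where f=x and A=I, THEN order.trans])

lemma compact_prob_vectors:
  assumes "finite I" shows "compact (prob_vectors I)"
proof -
  let ?P = "PiE UNIV (\<lambda>i. if i \<in> I then {0..1::real} else {0})"
  have "compactin (product_topology (\<lambda>i. euclidean) UNIV) ?P"
    by (subst compactin_PiE) auto
  then have "compact ?P"
    by (simp add: euclidean_product_topology)
  moreover have "closed {x::'a\<Rightarrow>real. sum x I = 1}"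
    by (intro closed_Collect_eq continuous_intros) (auto intro: continuous_on_product_coordinates)
  moreover have "prob_vectors I = ?P \<inter> {x. sum x I = 1}"
    using prob_vectors_le_1[OF _ assms]
    by (auto simp: prob_vectors_def PiE_iff split: if_splits) (metis order.refl)
  ultimately show ?thesis by (simp add: compact_Int_closed)
qed

lemma prob_vectors_point: "i0 \<in> I \<Longrightarrow> finite I \<Longrightarrow> (\<lambda>i. if i = i0 then 1 else 0) \<in> prob_vectors I"
  unfolding prob_vectors_def by auto

lemma prob_vectors_convex:
  assumes "x \<in> prob_vectors I" "y \<in> prob_vectors I" "0 \<le> t" "t \<le> 1"
  shows "(\<lambda>i. t * x i + (1 - t) * y i) \<in> prob_vectors I"
  using assms unfolding prob_vectors_def by (auto simp: sum.distrib sum_distrib_left[symmetric])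

lemma prob_vectors_average_ge:
  assumes "z \<in> prob_vectors J" "\<forall>j\<in>J. c \<le> g j"
  shows "c \<le> (\<Sum>j\<in>J. z j * g j)"
proof -
  have "(\<Sum>j\<in>J. z j * c) \<le> (\<Sum>j\<in>J. z j * g j)"
    using assms by (intro sum_mono mult_left_mono) (auto simp: prob_vectors_def)
  moreover have "(\<Sum>j\<in>J. z j * c) = c" using assms(1)
    by (simp add: prob_vectors_def sum_distrib_right[symmetric])
  ultimately show ?thesis by simp
qed

lemma prob_vectors_average_le:
  assumes "z \<in> prob_vectors J" "\<forall>j\<in>J. g j \<le> c"
  shows "(\<Sum>j\<in>J. z j * g j) \<le> c"
  using prob_vectors_average_ge[of z J "- c" "\<lambda>j. - g j"] assms by (simp add: sum_negf)

lemma has_mixed_saddle_transpose: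
  assumes "has_mixed_saddle I J A"
  shows "has_mixed_saddle J I (\<lambda>j i. - A i j)"
proof -
  from assms obtain x y v where "x \<in> prob_vectors I" "y \<in> prob_vectors J"
    "\<forall>j\<in>J. v \<le> (\<Sum>i\<in>I. x i * A i j)" "\<forall>i\<in>I. (\<Sum>j\<in>J. A i j * y j) \<le> v"
    unfolding has_mixed_saddle_def by blast
  then show ?thesis
    unfolding has_mixed_saddle_def
    by (intro bexI[of _ y] bexI[of _ x] exI[of _ "- v"]) (auto simp: sum_negf mult.commute)
qed

lemma continuous_on_Min_image:
  fixes f :: "'j \<Rightarrow> 'a::topological_space \<Rightarrow> real"
  assumes "finite J" "J \<noteq> {}" "\<And>j. continuous_on S (f j)"
  shows "continuous_on S (\<lambda>x. Min ((\<lambda>j. f j x) ` J))"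
  using assms(1,2)
proof (induction J rule: finite_ne_induct)
  case (singleton j) then show ?case using assms(3) by simp
next
  case (insert j F) then show ?case using assms(3) by (simp add: Min_insert continuous_on_min)
qed

lemma maximin_strategy_exists:
  fixes A :: "'a \<Rightarrow> 'b \<Rightarrow> real"
  assumes I: "finite I" "I \<noteq> {}" and J: "finite J" "J \<noteq> {}"
  obtains x0 v where "x0 \<in> prob_vectors I" "\<forall>j\<in>J. v \<le> (\<Sum>i\<in>I. x0 i * A i j)"
    "\<forall>x\<in>prob_vectors I. \<exists>j\<in>J. (\<Sum>i\<in>I. x i * A i j) \<le> v"
proof -
  define guarantee where "guarantee x = Min ((\<lambda>j. \<Sum>i\<in>I. x i * A i j) ` J)" for x
  have "continuous_on UNIV guarantee"
    unfolding guarantee_def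
    by (intro continuous_on_Min_image J continuous_intros continuous_on_product_coordinates)
  then have "continuous_on (prob_vectors I) guarantee"
    by (rule continuous_on_subset) simp
  moreover obtain i0 where "i0 \<in> I" using I by blast
  then have "prob_vectors I \<noteq> {}" using prob_vectors_point[OF _ I(1)] by blast
  ultimately obtain x0 where x0: "x0 \<in> prob_vectors I"
    and best: "\<forall>x\<in>prob_vectors I. guarantee x \<le> guarantee x0"
    using continuous_attains_sup[OF compact_prob_vectors[OF I(1)]] by blast
  have "\<forall>j\<in>J. guarantee x0 \<le> (\<Sum>i\<in>I. x0 i * A i j)"
    unfolding guarantee_def using J by auto
  moreover have "\<exists>j\<in>J. (\<Sum>i\<in>I. x i * A i j) \<le> guarantee x0" if x: "x \<in> prob_vectors I" for x
  proof -
    have "guarantee x \<in> (\<lambda>j. \<Sum>i\<in>I. x i * A i j) ` J"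
      unfolding guarantee_def using J by (intro Min_in) auto
    then obtain j where j: "j \<in> J" and eq: "guarantee x = (\<Sum>i\<in>I. x i * A i j)" by blast
    have "guarantee x \<le> guarantee x0" using best x by blast
    with j eq show ?thesis by auto
  qed
  ultimately show ?thesis using that x0 by blast
qed

lemma minimax_strategy_exists:
  fixes A :: "'a \<Rightarrow> 'b \<Rightarrow> real"
  assumes "finite I" "I \<noteq> {}" "finite J" "J \<noteq> {}"
  obtains y0 w where "y0 \<in> prob_vectors J" "\<forall>i\<in>I. (\<Sum>j\<in>J. A i j * y0 j) \<le> w"
    "\<forall>y\<in>prob_vectors J. \<exists>i\<in>I. w \<le> (\<Sum>j\<in>J. A i j * y j)"
proof -
  obtain y0 v where y0: "y0 \<in> prob_vectors J" and v: "\<forall>i\<in>I. v \<le> (\<Sum>j\<in>J. y0 j * - A i j)"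
    and best: "\<forall>y\<in>prob_vectors J. \<exists>i\<in>I. (\<Sum>j\<in>J. y j * - A i j) \<le> v"
    using maximin_strategy_exists[OF assms(3,4,1,2), of "\<lambda>j i. - A i j"] by blast
  show ?thesis
  proof (rule that[of y0 "- v"])
    show "\<forall>i\<in>I. (\<Sum>j\<in>J. A i j * y0 j) \<le> - v"
      using v by (simp add: sum_negf mult.commute le_minus_iff)
    show "\<forall>y\<in>prob_vectors J. \<exists>i\<in>I. - v \<le> (\<Sum>j\<in>J. A i j * y j)"
      using best by (force simp: sum_negf mult.commute)
  qed (fact y0)
qed

text \<open>A saddle point of the game without column k yields a strategy x1 that secures the
  minimax value w > v against every other column.  Mixing a little of x1 into the maximin
  strategy x0 keeps the slack column k above v and lifts all others above v.\<close>
lemma no_saddle_without_slack_column: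
  fixes A :: "'a \<Rightarrow> 'b \<Rightarrow> real"
  assumes fJ: "finite J" and x0: "x0 \<in> prob_vectors I"
    and x0v: "\<forall>j\<in>J. v \<le> (\<Sum>i\<in>I. x0 i * A i j)"
    and maximin: "\<forall>x\<in>prob_vectors I. \<exists>j\<in>J. (\<Sum>i\<in>I. x i * A i j) \<le> v"
    and minimax: "\<forall>y\<in>prob_vectors J. \<exists>i\<in>I. w \<le> (\<Sum>j\<in>J. A i j * y j)"
    and vw: "v < w" and k: "k \<in> J" and slack: "v < (\<Sum>i\<in>I. x0 i * A i k)"
  shows "\<not> has_mixed_saddle I (J - {k}) A"
proof
  assume "has_mixed_saddle I (J - {k}) A"
  then obtain x1 y1 v' where x1: "x1 \<in> prob_vectors I" and y1: "y1 \<in> prob_vectors (J - {k})"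
    and c1: "\<forall>j\<in>J - {k}. v' \<le> (\<Sum>i\<in>I. x1 i * A i j)"
    and r1: "\<forall>i\<in>I. (\<Sum>j\<in>J - {k}. A i j * y1 j) \<le> v'"
    unfolding has_mixed_saddle_def by blast
  have y1k: "y1 k = 0" using y1 by (simp add: prob_vectors_def)
  have "y1 \<in> prob_vectors J"
    using y1 y1k sum.remove[OF fJ k, of y1] unfolding prob_vectors_def by auto
  with minimax obtain i where "i \<in> I" "w \<le> (\<Sum>j\<in>J. A i j * y1 j)" by blast
  with r1 y1k sum.remove[OF fJ k, of "\<lambda>j. A i j * y1 j"] have wv': "w \<le> v'" by auto
  let ?col = "\<lambda>x j. \<Sum>i\<in>I. x i * A i j"
  define C where "C = \<bar>?col x1 k - ?col x0 k\<bar> + 1"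
  define d where "d = ?col x0 k - v"
  define t where "t = min (1/2) (d / (2 * C))"
  have C: "C > 0" and d: "d > 0" using slack by (auto simp: C_def d_def)
  then have t: "0 < t" "t \<le> 1" "t * C \<le> d / 2" by (auto simp: t_def min_def field_simps)
  define xt where "xt i = t * x1 i + (1 - t) * x0 i" for i
  have "xt \<in> prob_vectors I" unfolding xt_def using prob_vectors_convex[OF x1 x0] t by auto
  with maximin obtain j where j: "j \<in> J" "?col xt j \<le> v" by blast
  have col_xt: "?col xt j = t * ?col x1 j + (1 - t) * ?col x0 j"
    unfolding xt_def by (simp add: distrib_right mult.assoc sum.distrib sum_distrib_left)
  show False
  proof (cases "j = k")
    case True
    have "\<bar>t * (?col x1 k - ?col x0 k)\<bar> \<le> t * C" using t by (simp add: abs_mult C_def)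
    then have "?col x0 k - d / 2 \<le> ?col xt k"
      using t col_xt[unfolded True] by (simp add: algebra_simps abs_le_iff)
    moreover have "?col xt k \<le> v" using j True by simp
    ultimately show False using slack d_def by linarith
  next
    case False
    with j c1 have "v' \<le> ?col x1 j" by auto
    moreover have "v \<le> ?col x0 j" using x0v j by auto
    ultimately have "t * v' + (1 - t) * v \<le> ?col xt j"
      unfolding col_xt using t by (intro add_mono mult_left_mono) auto
    moreover have "v < t * v' + (1 - t) * v" using t wv' vw by (simp add: algebra_simps)
    ultimately show False using j by linarith
  qed
qed

lemma no_saddle_without_slack_row:
  fixes A :: "'a \<Rightarrow> 'b \<Rightarrow> real"
  assumes fI: "finite I" and y0: "y0 \<in> prob_vectors J"
    and y0w: "\<forall>i\<in>I. (\<Sum>j\<in>J. A i j * y0 j) \<le> w"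
    and minimax: "\<forall>y\<in>prob_vectors J. \<exists>i\<in>I. w \<le> (\<Sum>j\<in>J. A i j * y j)"
    and maximin: "\<forall>x\<in>prob_vectors I. \<exists>j\<in>J. (\<Sum>i\<in>I. x i * A i j) \<le> v"
    and vw: "v < w" and i: "i \<in> I" and slack: "(\<Sum>j\<in>J. A i j * y0 j) < w"
  shows "\<not> has_mixed_saddle (I - {i}) J A"
proof
  assume "has_mixed_saddle (I - {i}) J A"
  then have "has_mixed_saddle J (I - {i}) (\<lambda>j i. - A i j)"
    by (rule has_mixed_saddle_transpose)
  moreover have "\<not> has_mixed_saddle J (I - {i}) (\<lambda>j i. - A i j)"
  proof (rule no_saddle_without_slack_column[OF fI y0 _ _ _ _ i])
    show "\<forall>i\<in>I. - w \<le> (\<Sum>j\<in>J. y0 j * - A i j)"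
      using y0w by (simp add: sum_negf mult.commute)
    show "\<forall>x\<in>prob_vectors J. \<exists>i\<in>I. (\<Sum>j\<in>J. x j * - A i j) \<le> - w"
      using minimax by (force simp: sum_negf mult.commute)
    show "\<forall>y\<in>prob_vectors I. \<exists>j\<in>J. - v \<le> (\<Sum>i\<in>I. - A i j * y i)"
      using maximin by (force simp: sum_negf mult.commute)
    show "- w < (\<Sum>j\<in>J. y0 j * - A i j)"
      using slack by (simp add: sum_negf mult.commute)
  qed (use vw in simp)
  ultimately show False by blast
qed

text \<open>The minimax theorem for finite matrix games, by induction on the size of the matrix:
  if the maximin value v were below the minimax value w, some row or column would be slack
  against the optimal strategies, and removing it contradicts the induction hypothesis.\<close>
theorem finite_minimax:
  fixes A :: "'a \<Rightarrow> 'b \<Rightarrow> real"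
  assumes "finite I" "I \<noteq> {}" "finite J" "J \<noteq> {}"
  shows "has_mixed_saddle I J A"
  using assms
proof (induction "card I + card J" arbitrary: I J rule: less_induct)
  case less
  note fin = less.prems
  let ?col = "\<lambda>x j. \<Sum>i\<in>I. x i * A i j" and ?row = "\<lambda>y i. \<Sum>j\<in>J. A i j * y j"
  obtain x0 v where x0: "x0 \<in> prob_vectors I" and x0v: "\<forall>j\<in>J. v \<le> ?col x0 j"
    and maximin: "\<forall>x\<in>prob_vectors I. \<exists>j\<in>J. ?col x j \<le> v"
    using maximin_strategy_exists[OF fin] by blast
  obtain y0 w where y0: "y0 \<in> prob_vectors J" and y0w: "\<forall>i\<in>I. ?row y0 i \<le> w"
    and minimax: "\<forall>y\<in>prob_vectors J. \<exists>i\<in>I. w \<le> ?row y i"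
    using minimax_strategy_exists[OF fin] by blast
  have bilinear: "(\<Sum>j\<in>J. y0 j * ?col x0 j) = (\<Sum>i\<in>I. x0 i * ?row y0 i)"
    unfolding sum_distrib_left by (subst sum.swap) (simp add: algebra_simps)
  have "v \<le> w"
    using prob_vectors_average_ge[OF y0 x0v] prob_vectors_average_le[OF x0 y0w] bilinear by linarith
  show ?case
  proof (cases "v = w")
    case True
    then show ?thesis unfolding has_mixed_saddle_def using x0 y0 x0v y0w by blast
  next
    case False
    with \<open>v \<le> w\<close> have vw: "v < w" by simp
    consider (column) k where "k \<in> J" "v < ?col x0 k" | (row) i where "i \<in> I" "?row y0 i < w"
      | (neither) "\<forall>j\<in>J. ?col x0 j \<le> v" "\<forall>i\<in>I. w \<le> ?row y0 i"
      using not_le by blast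
    then show ?thesis
    proof cases
      case column
      have "J - {k} \<noteq> {}"
      proof
        assume "J - {k} = {}"
        with column have "J = {k}" by auto
        with maximin x0 column show False by auto
      qed
      moreover have "card I + card (J - {k}) < card I + card J"
        using card_Diff1_less[OF fin(3) column(1)] by linarith
      ultimately have "has_mixed_saddle I (J - {k}) A"
        using less.hyps fin by simp
      with no_saddle_without_slack_column[OF fin(3) x0 x0v maximin minimax vw column]
      show ?thesis by blast
    next
      case row
      have "I - {i} \<noteq> {}"
      proof
        assume "I - {i} = {}"
        with row have "I = {i}" by auto
        with minimax y0 row show False by auto
      qed
      moreover have "card (I - {i}) + card J < card I + card J"
        using card_Diff1_less[OF fin(1) row(1)] by linarith
      ultimately have "has_mixed_saddle (I - {i}) J A"
        using less.hyps fin by simp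
      with no_saddle_without_slack_row[OF fin(1) y0 y0w minimax maximin vw row]
      show ?thesis by blast
    next
      case neither
      then have "w \<le> (\<Sum>i\<in>I. x0 i * ?row y0 i)" "(\<Sum>j\<in>J. y0 j * ?col x0 j) \<le> v"
        using prob_vectors_average_ge[OF x0] prob_vectors_average_le[OF y0] by auto
      then show ?thesis using bilinear vw by linarith
    qed
  qed
qed

section \<open>Skew-symmetric games\<close>

lemma skew_quadratic_form_zero:
  fixes K :: "'a::group_add \<Rightarrow> 'a \<Rightarrow> real"
  assumes sym: "uminus ` N = N" and skew: "\<forall>a\<in>N. \<forall>b\<in>N. K (-b) (-a) = - K a b"
  shows "(\<Sum>i\<in>N. \<Sum>j\<in>N. y i * K (- i) j * y j) = 0"
proof -
  have memN: "-a \<in> N" if "a \<in> N" for a using sym that by force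
  have pointwise: "y i * K (- i) j * y j = - (y j * K (- j) i * y i)" if "i \<in> N" "j \<in> N" for i j
    using skew[rule_format, OF memN[OF that(2)] that(1)] by simp
  have "(\<Sum>i\<in>N. \<Sum>j\<in>N. y i * K (- i) j * y j) = (\<Sum>i\<in>N. \<Sum>j\<in>N. - (y j * K (- j) i * y i))"
    by (rule sum.cong[OF refl], rule sum.cong[OF refl], rule pointwise)
  also have "\<dots> = - (\<Sum>i\<in>N. \<Sum>j\<in>N. y j * K (- j) i * y i)"
    by (simp add: sum_negf)
  also have "\<dots> = - (\<Sum>i\<in>N. \<Sum>j\<in>N. y i * K (- i) j * y j)"
    by (subst sum.swap) simp
  finally show ?thesis by simp
qed

text \<open>Against the strategy x(i) = y(-i) built from the column player's optimal y, the
  expected payoff is the quadratic form of the skew-symmetric matrix K(-i, j) at y, which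
  vanishes; hence the value of the game is 0 and the row player's optimal strategy
  concedes nothing.\<close>
lemma skew_finite_game_optimal_strategy:
  fixes K :: "'a::group_add \<Rightarrow> 'a \<Rightarrow> real"
  assumes fN: "finite N" and "N \<noteq> {}" and sym: "uminus ` N = N"
    and skew: "\<forall>a\<in>N. \<forall>b\<in>N. K (-b) (-a) = - K a b"
  obtains x where "x \<in> prob_vectors N" "\<forall>b\<in>N. (\<Sum>a\<in>N. x a * K a b) \<le> 0"
proof -
  have memN: "-a \<in> N" if "a \<in> N" for a using sym that by force
  have "has_mixed_saddle N N (\<lambda>i j. - K i j)" by (rule finite_minimax) (use assms in auto)
  then obtain x y v where x: "x \<in> prob_vectors N" and y: "y \<in> prob_vectors N"
    and c1: "\<forall>j\<in>N. v \<le> (\<Sum>i\<in>N. x i * - K i j)"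
    and c2: "\<forall>i\<in>N. (\<Sum>j\<in>N. - K i j * y j) \<le> v"
    unfolding has_mixed_saddle_def by blast
  have reindex: "(\<Sum>i\<in>N. f (- i)) = (\<Sum>i\<in>N. f i)" for f :: "'a \<Rightarrow> real"
    by (rule sum.reindex_bij_witness[where i=uminus and j=uminus]) (auto intro: memN)
  define x' where "x' i = y (- i)" for i
  have "x' \<in> prob_vectors N"
  proof -
    have "x' i = 0" if "i \<notin> N" for i
      using that memN[of "- i"] y unfolding x'_def prob_vectors_def by auto
    moreover have "sum x' N = 1" using reindex[of y] y by (simp add: x'_def prob_vectors_def)
    ultimately show ?thesis using y by (simp add: x'_def prob_vectors_def)
  qed
  then have "(\<Sum>i\<in>N. x' i * (\<Sum>j\<in>N. - K i j * y j)) \<le> v"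
    by (rule prob_vectors_average_le[OF _ c2])
  moreover have "(\<Sum>i\<in>N. x' i * (\<Sum>j\<in>N. - K i j * y j))
      = - (\<Sum>i\<in>N. \<Sum>j\<in>N. y (- i) * K i j * y j)"
    by (simp add: x'_def sum_distrib_left sum_negf[symmetric] algebra_simps)
  moreover have "(\<Sum>i\<in>N. \<Sum>j\<in>N. y (- i) * K i j * y j) = (\<Sum>i\<in>N. \<Sum>j\<in>N. y i * K (- i) j * y j)"
    using reindex[of "\<lambda>i. \<Sum>j\<in>N. y i * K (- i) j * y j"] by (simp only: minus_minus)
  moreover have "(\<Sum>i\<in>N. \<Sum>j\<in>N. y i * K (- i) j * y j) = 0"
    by (rule skew_quadratic_form_zero[OF sym skew])
  ultimately have "0 \<le> v" by simp
  with c1 have "\<forall>b\<in>N. (\<Sum>a\<in>N. x a * K a b) \<le> 0"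
    by (auto simp: sum_negf)
  with x show ?thesis by (rule that)
qed

lemma compact_symmetric_finite_net:
  fixes S :: "'a::real_normed_vector set"
  assumes "compact S" "uminus ` S = S" "d > 0"
  obtains N where "finite N" "N \<subseteq> S" "uminus ` N = N" "\<forall>b\<in>S. \<exists>s\<in>N. dist s b < d"
proof -
  have "S \<subseteq> (\<Union>c\<in>S. ball c d)" using assms(3) by auto
  then obtain T where T: "T \<subseteq> S" "finite T" "S \<subseteq> (\<Union>c\<in>T. ball c d)"
    using compactE_image[OF assms(1), where f="\<lambda>c. ball c d" and C=S] by blast
  have "uminus ` T \<subseteq> S" using T(1) assms(2) by auto
  moreover have "uminus ` (T \<union> uminus ` T) = T \<union> uminus ` T" by (auto simp: image_Un image_image)
  moreover have "\<forall>b\<in>S. \<exists>s\<in>T \<union> uminus ` T. dist s b < d" using T(3) by fastforce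
  ultimately show ?thesis using T by (intro that[of "T \<union> uminus ` T"]) auto
qed

text \<open>Uniform continuity lets the optimal strategy of the game restricted to a symmetric
  finite d-net of S serve as an \<open>\<epsilon>\<close>-optimal strategy on all of S.\<close>
lemma skew_game_eps_optimal_finite_strategy:
  fixes K :: "'a::real_normed_vector \<Rightarrow> 'a \<Rightarrow> real"
  assumes cont: "continuous_on (S \<times> S) (case_prod K)" and cS: "compact S"
    and neS: "S \<noteq> {}" and sym: "uminus ` S = S"
    and skew: "\<forall>a\<in>S. \<forall>b\<in>S. K (-b) (-a) = - K a b" and e: "\<epsilon> > 0"
  obtains N x where "finite N" "N \<subseteq> S" "x \<in> prob_vectors N"
    "\<forall>b\<in>S. (\<Sum>a\<in>N. x a * K a b) \<le> \<epsilon>"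
proof -
  have "uniformly_continuous_on (S \<times> S) (case_prod K)"
    by (rule compact_uniformly_continuous[OF cont compact_Times[OF cS cS]])
  then obtain d where d: "d > 0" and dK: "\<forall>p\<in>S \<times> S. \<forall>q\<in>S \<times> S.
      dist q p < d \<longrightarrow> dist (case_prod K q) (case_prod K p) < \<epsilon>"
    unfolding uniformly_continuous_on_def using e by metis
  obtain N where fN: "finite N" and NS: "N \<subseteq> S" and "uminus ` N = N"
    and net: "\<forall>b\<in>S. \<exists>s\<in>N. dist s b < d"
    using compact_symmetric_finite_net[OF cS sym d] by blast
  moreover have "N \<noteq> {}" using net neS by blast
  moreover have "\<forall>a\<in>N. \<forall>b\<in>N. K (-b) (-a) = - K a b" using skew NS by blast
  ultimately obtain x where x: "x \<in> prob_vectors N"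
    and opt: "\<forall>b\<in>N. (\<Sum>a\<in>N. x a * K a b) \<le> 0"
    using skew_finite_game_optimal_strategy[OF fN] by blast
  have "\<forall>b\<in>S. (\<Sum>a\<in>N. x a * K a b) \<le> \<epsilon>"
  proof
    fix b assume b: "b \<in> S"
    with net obtain s where s: "s \<in> N" "dist s b < d" by blast
    have "K a b \<le> K a s + \<epsilon>" if a: "a \<in> N" for a
    proof -
      have "(a, b) \<in> S \<times> S" "(a, s) \<in> S \<times> S" using a NS b s by auto
      moreover have "dist (a, s) (a, b) < d" using s by (simp add: dist_Pair_Pair)
      ultimately have "dist (K a s) (K a b) < \<epsilon>" using dK by fastforce
      then show ?thesis by (simp add: dist_real_def)
    qed
    then have "(\<Sum>a\<in>N. x a * K a b) \<le> (\<Sum>a\<in>N. x a * (K a s + \<epsilon>))"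
      using x by (intro sum_mono mult_left_mono) (auto simp: prob_vectors_def)
    also have "\<dots> = (\<Sum>a\<in>N. x a * K a s) + \<epsilon>"
      using x by (simp add: prob_vectors_def distrib_left sum.distrib sum_distrib_right[symmetric])
    also have "\<dots> \<le> \<epsilon>" using opt s by auto
    finally show "(\<Sum>a\<in>N. x a * K a b) \<le> \<epsilon>" .
  qed
  with fN NS x show ?thesis by (rule that)
qed

section \<open>Mixed strategies on a compact symmetric set\<close>

definition mixed_extension :: "('a \<Rightarrow> 'a \<Rightarrow> real) \<Rightarrow> 'a measure \<Rightarrow> 'a measure \<Rightarrow> real" where
  "mixed_extension K F1 F2 = (\<integral>b. (\<integral>a. K a b \<partial>F1) \<partial>F2)"

lemma continuous_on_kernel_compose:
  assumes "continuous_on UNIV (case_prod K)" "continuous_on UNIV f" "continuous_on UNIV g"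
  shows "continuous_on UNIV (\<lambda>x. K (f x) (g x))"
  using continuous_on_compose2[OF assms(1) continuous_on_Pair[OF assms(2,3)]] by simp

lemma space_mixed_strategy:
  assumes "F \<in> mixed_strategies S" shows "space F = S"
proof -
  have "sets F = sets (restrict_space borel S)" using assms by (simp add: mixed_strategies_def)
  from sets_eq_imp_space_eq[OF this] show ?thesis by (simp add: space_restrict_space)
qed

lemma borel_measurable_mixed_strategy:
  assumes "F \<in> mixed_strategies S" "continuous_on S f"
  shows "f \<in> borel_measurable F"
  using borel_measurable_continuous_on_restrict[OF assms(2)] assms(1)
  by (subst measurable_cong_sets) (auto simp: mixed_strategies_def)

lemma borel_measurable_pair_restrict_space:
  fixes g :: "'a::second_countable_topology \<times> 'b::second_countable_topology \<Rightarrow> real"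
  assumes "continuous_on UNIV g"
    and "sets M1 = sets (restrict_space borel S)" "sets M2 = sets (restrict_space borel T)"
  shows "g \<in> borel_measurable (M1 \<Otimes>\<^sub>M M2)"
proof -
  have incl: "(\<lambda>x. x) \<in> measurable M borel" if "sets M = sets (restrict_space borel U)"
    for M :: "'c::topological_space measure" and U
    using measurable_restrict_space1[OF measurable_ident_sets[OF refl], of borel U]
    by (subst measurable_cong_sets[OF that refl]) simp
  have "(\<lambda>p. (fst p, snd p)) \<in> measurable (M1 \<Otimes>\<^sub>M M2) (borel \<Otimes>\<^sub>M borel)"
    by (intro measurable_Pair measurable_compose[OF measurable_fst incl[OF assms(2)]]
          measurable_compose[OF measurable_snd incl[OF assms(3)]])
  moreover have "g \<in> borel_measurable (borel \<Otimes>\<^sub>M borel)"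
    unfolding borel_prod using borel_measurable_continuous_onI[OF assms(1)] .
  ultimately show ?thesis using measurable_compose by fastforce
qed

lemma borel_measurable_integral_mixed_strategy:
  fixes K :: "real \<times> real \<Rightarrow> real \<times> real \<Rightarrow> real"
  assumes F: "F \<in> mixed_strategies S" and cont: "continuous_on UNIV (case_prod K)"
  shows "(\<lambda>b. \<integral>a. K a b \<partial>F) \<in> borel_measurable (restrict_space borel T)"
proof -
  interpret prob_space F using F by (simp add: mixed_strategies_def)
  have "continuous_on UNIV (\<lambda>p. K (snd p) (fst p))"
    by (intro continuous_on_kernel_compose[OF cont] continuous_intros)
  then have "(\<lambda>p. K (snd p) (fst p)) \<in> borel_measurable (restrict_space borel T \<Otimes>\<^sub>M F)"
    by (rule borel_measurable_pair_restrict_space) (use F in \<open>auto simp: mixed_strategies_def\<close>)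
  then show ?thesis by (intro borel_measurable_lebesgue_integral) (simp add: case_prod_beta)
qed

lemma (in prob_space) abs_integral_le_bound:
  fixes f :: "'a \<Rightarrow> real"
  assumes "\<forall>x\<in>space M. \<bar>f x\<bar> \<le> C"
  shows "\<bar>\<integral>x. f x \<partial>M\<bar> \<le> C"
proof (cases "integrable M f")
  case True
  have "\<bar>\<integral>x. f x \<partial>M\<bar> \<le> (\<integral>x. \<bar>f x\<bar> \<partial>M)"
    using integral_norm_bound[of M f] by simp
  also have "\<dots> \<le> (\<integral>x. C \<partial>M)"
    using True assms by (intro integral_mono) auto
  finally show ?thesis using prob_space by simp
next
  case False
  obtain x where "x \<in> space M" using not_empty by blast
  with assms have "0 \<le> C" by force
  with False show ?thesis by (simp add: not_integrable_integral_eq)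
qed

text \<open>No integrability is needed: a non-integrable function has integral 0.\<close>
lemma (in prob_space) integral_le_nonneg_bound:
  fixes f :: "'a \<Rightarrow> real"
  assumes "0 \<le> c" "\<forall>x\<in>space M. f x \<le> c"
  shows "(\<integral>x. f x \<partial>M) \<le> c"
proof (cases "integrable M f")
  case True
  then show ?thesis using assms(2) by (intro integral_le_const) auto
qed (use assms(1) in \<open>simp add: not_integrable_integral_eq\<close>)

definition reflect_strategy :: "(real \<times> real) set \<Rightarrow> (real \<times> real) measure \<Rightarrow> (real \<times> real) measure" where
  "reflect_strategy S F = distr F (restrict_space borel S) uminus"

lemma uminus_measurable_mixed_strategy:
  assumes "F \<in> mixed_strategies S" "uminus ` S = S"
  shows "uminus \<in> measurable F (restrict_space borel S)"
proof (rule measurable_restrict_space2)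
  show "uminus \<in> space F \<rightarrow> S" using assms by (force simp: space_mixed_strategy)
  show "uminus \<in> borel_measurable F"
    by (rule borel_measurable_mixed_strategy[OF assms(1)]) (intro continuous_intros)
qed

lemma reflect_strategy_mixed:
  assumes "F \<in> mixed_strategies S" "uminus ` S = S"
  shows "reflect_strategy S F \<in> mixed_strategies S"
  using prob_space.prob_space_distr[OF _ uminus_measurable_mixed_strategy[OF assms]] assms(1)
  unfolding mixed_strategies_def reflect_strategy_def by simp

lemma reflect_strategy_involution:
  assumes F: "F \<in> mixed_strategies S" and sym: "uminus ` S = S"
  shows "reflect_strategy S (reflect_strategy S F) = F"
proof -
  have "reflect_strategy S (reflect_strategy S F) = distr F (restrict_space borel S) (uminus \<circ> uminus)"
    unfolding reflect_strategy_def
    using uminus_measurable_mixed_strategy[OF reflect_strategy_mixed[OF F sym] sym]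
      uminus_measurable_mixed_strategy[OF F sym]
    by (subst distr_distr) (auto simp: reflect_strategy_def)
  also have "\<dots> = distr F (restrict_space borel S) (\<lambda>x. x)"
    by (simp add: comp_def)
  also have "\<dots> = F"
    using F by (intro distr_id2) (simp add: mixed_strategies_def)
  finally show ?thesis .
qed

lemma integral_reflect_strategy:
  fixes h :: "real \<times> real \<Rightarrow> real"
  assumes "F \<in> mixed_strategies S" "uminus ` S = S" "h \<in> borel_measurable (restrict_space borel S)"
  shows "(\<integral>x. h x \<partial>reflect_strategy S F) = (\<integral>x. h (- x) \<partial>F)"
  unfolding reflect_strategy_def
  by (rule integral_distr[OF uminus_measurable_mixed_strategy[OF assms(1,2)] assms(3)])

lemma skew_kernel_integral_swap:
  fixes H :: "real \<times> real \<Rightarrow> real \<times> real \<Rightarrow> real"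
  assumes F: "F \<in> mixed_strategies S" and G: "G \<in> mixed_strategies S"
    and cont: "continuous_on UNIV (case_prod H)"
    and skew: "\<forall>a\<in>S. \<forall>b\<in>S. H a b = - H b a" and bound: "\<forall>a\<in>S. \<forall>b\<in>S. \<bar>H a b\<bar> \<le> C"
  shows "(\<integral>b. (\<integral>a. H a b \<partial>F) \<partial>G) = - (\<integral>b. (\<integral>a. H a b \<partial>G) \<partial>F)"
proof -
  interpret pair_prob_space F G
    using F G by (simp add: pair_prob_space_def pair_sigma_finite_def prob_space_imp_sigma_finite
        mixed_strategies_def)
  have "integrable (F \<Otimes>\<^sub>M G) (case_prod H)"
  proof (rule integrable_const_bound[where B=C])
    show "AE p in F \<Otimes>\<^sub>M G. norm (case_prod H p) \<le> C"
      using bound F G by (intro AE_I2) (auto simp: space_pair_measure space_mixed_strategy)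
    show "case_prod H \<in> borel_measurable (F \<Otimes>\<^sub>M G)"
      by (rule borel_measurable_pair_restrict_space[OF cont]) (use F G in \<open>auto simp: mixed_strategies_def\<close>)
  qed
  then have "(\<integral>b. (\<integral>a. H a b \<partial>F) \<partial>G) = (\<integral>a. (\<integral>b. H a b \<partial>G) \<partial>F)"
    by (rule Fubini_integral)
  also have "\<dots> = (\<integral>a. (\<integral>b. - H b a \<partial>G) \<partial>F)"
  proof (intro Bochner_Integration.integral_cong refl)
    fix a b assume "a \<in> space F" "b \<in> space G"
    then show "H a b = - H b a"
      using skew[rule_format, of a b] by (simp add: space_mixed_strategy[OF F] space_mixed_strategy[OF G])
  qed
  finally show ?thesis by simp
qed

lemma mixed_extension_reflect_skew:
  fixes K :: "real \<times> real \<Rightarrow> real \<times> real \<Rightarrow> real"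
  assumes F: "F \<in> mixed_strategies S" and G: "G \<in> mixed_strategies S" and sym: "uminus ` S = S"
    and cont: "continuous_on UNIV (case_prod K)"
    and skew: "\<forall>a\<in>S. \<forall>b\<in>S. K (-b) (-a) = - K a b" and bound: "\<forall>a\<in>S. \<forall>b\<in>S. \<bar>K a b\<bar> \<le> C"
  shows "mixed_extension K F (reflect_strategy S G) = - mixed_extension K G (reflect_strategy S F)"
proof -
  have memS: "-a \<in> S" if "a \<in> S" for a using sym that by force
  have reflected: "mixed_extension K F' (reflect_strategy S G') = (\<integral>b. (\<integral>a. K a (- b) \<partial>F') \<partial>G')"
    if "F' \<in> mixed_strategies S" "G' \<in> mixed_strategies S" for F' G'
    unfolding mixed_extension_def
    by (rule integral_reflect_strategy[OF that(2) sym borel_measurable_integral_mixed_strategy[OF that(1) cont]])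
  have "continuous_on UNIV (\<lambda>p. K (fst p) (- snd p))"
    by (intro continuous_on_kernel_compose[OF cont] continuous_intros)
  then have H_cont: "continuous_on UNIV (\<lambda>(a, b). K a (- b))"
    by (simp add: case_prod_beta')
  have H_skew: "\<forall>a\<in>S. \<forall>b\<in>S. K a (- b) = - K b (- a)"
  proof (intro ballI)
    fix a b assume "a \<in> S" "b \<in> S"
    from skew[rule_format, OF this(2) memS[OF this(1)]] show "K a (- b) = - K b (- a)" by simp
  qed
  have H_bound: "\<forall>a\<in>S. \<forall>b\<in>S. \<bar>K a (- b)\<bar> \<le> C" using bound memS by simp
  have "(\<integral>b. (\<integral>a. K a (- b) \<partial>F) \<partial>G) = - (\<integral>b. (\<integral>a. K a (- b) \<partial>G) \<partial>F)"
    by (rule skew_kernel_integral_swap[OF F G H_cont H_skew H_bound])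
  then show ?thesis using reflected F G by simp
qed

text \<open>The junk value outside S only makes the map total: \<open>embed_pmf x\<close> lives on \<open>N \<subseteq> S\<close>.\<close>
definition pmf_strategy :: "(real \<times> real) set \<Rightarrow> (real \<times> real \<Rightarrow> real) \<Rightarrow> (real \<times> real) measure" where
  "pmf_strategy S x = distr (measure_pmf (embed_pmf x)) (restrict_space borel S)
     (\<lambda>z. if z \<in> S then z else (SOME s. s \<in> S))"

lemma pmf_strategy:
  fixes h :: "real \<times> real \<Rightarrow> real"
  assumes fN: "finite N" and NS: "N \<subseteq> S" and x: "x \<in> prob_vectors N" and neS: "S \<noteq> {}"
    and h: "h \<in> borel_measurable (restrict_space borel S)"
  shows "pmf_strategy S x \<in> mixed_strategies S"
    and "(\<integral>a. h a \<partial>pmf_strategy S x) = (\<Sum>a\<in>N. x a * h a)"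
proof -
  have nonneg: "\<And>a. 0 \<le> x a" and zero: "\<And>a. a \<notin> N \<Longrightarrow> x a = 0"
    using x unfolding prob_vectors_def by blast+
  have "(\<integral>\<^sup>+a. ennreal (x a) \<partial>count_space UNIV) = (\<integral>\<^sup>+a. ennreal (x a) \<partial>count_space N)"
    by (subst nn_integral_count_space_indicator) (auto intro!: nn_integral_cong simp: zero indicator_def)
  also have "\<dots> = 1" using fN nonneg x by (simp add: nn_integral_count_space_finite prob_vectors_def)
  finally have pmf: "pmf (embed_pmf x) a = x a" for a by (rule pmf_embed_pmf[OF nonneg])
  define T where "T z = (if z \<in> S then z else (SOME s. s \<in> S))" for z
  have "T z \<in> S" for z unfolding T_def using neS by (auto intro: someI_ex)
  then have T: "T \<in> measurable (measure_pmf (embed_pmf x)) (restrict_space borel S)"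
    by (simp add: space_restrict_space)
  show "pmf_strategy S x \<in> mixed_strategies S"
    unfolding mixed_strategies_def pmf_strategy_def T_def[symmetric]
    using measure_pmf.prob_space_distr[OF T] by simp
  have "(\<integral>a. h a \<partial>pmf_strategy S x) = (\<integral>z. h (T z) \<partial>measure_pmf (embed_pmf x))"
    unfolding pmf_strategy_def T_def[symmetric] by (rule integral_distr[OF T h])
  also have "\<dots> = (\<Sum>a\<in>N. pmf (embed_pmf x) a *\<^sub>R h (T a))"
    by (rule integral_measure_pmf[OF fN]) (metis set_pmf_iff pmf zero)
  also have "\<dots> = (\<Sum>a\<in>N. x a * h a)"
    using NS by (intro sum.cong) (auto simp: pmf T_def)
  finally show "(\<integral>a. h a \<partial>pmf_strategy S x) = (\<Sum>a\<in>N. x a * h a)" .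
qed

lemma skew_game_eps_optimal_mixed_strategy:
  fixes K :: "real \<times> real \<Rightarrow> real \<times> real \<Rightarrow> real"
  assumes cont: "continuous_on UNIV (case_prod K)" and "compact S" and neS: "S \<noteq> {}"
    and "uminus ` S = S" and "\<forall>a\<in>S. \<forall>b\<in>S. K (-b) (-a) = - K a b" and e: "\<epsilon> > 0"
  obtains F where "F \<in> mixed_strategies S" "\<forall>G\<in>mixed_strategies S. mixed_extension K F G \<le> \<epsilon>"
proof -
  obtain N x where N: "finite N" "N \<subseteq> S" and x: "x \<in> prob_vectors N"
    and eps: "\<forall>b\<in>S. (\<Sum>a\<in>N. x a * K a b) \<le> \<epsilon>"
    by (rule skew_game_eps_optimal_finite_strategy[OF continuous_on_subset[OF cont subset_UNIV] assms(2-6)])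
  have h: "(\<lambda>a. K a b) \<in> borel_measurable (restrict_space borel S)" for b
    using continuous_on_kernel_compose[OF cont continuous_on_id continuous_on_const]
    by (rule borel_measurable_continuous_on_restrict[OF continuous_on_subset[OF _ subset_UNIV]])
  note F = pmf_strategy[OF N x neS h]
  have "\<forall>G\<in>mixed_strategies S. mixed_extension K (pmf_strategy S x) G \<le> \<epsilon>"
  proof
    fix G assume G: "G \<in> mixed_strategies S"
    interpret prob_space G using G by (simp add: mixed_strategies_def)
    have "\<forall>b\<in>space G. (\<Sum>a\<in>N. x a * K a b) \<le> \<epsilon>"
      using eps by (simp add: space_mixed_strategy[OF G])
    then show "mixed_extension K (pmf_strategy S x) G \<le> \<epsilon>"
      unfolding mixed_extension_def F(2) by (rule integral_le_nonneg_bound[OF less_imp_le[OF e]])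
  qed
  with F(1) show ?thesis by (rule that)
qed

lemma INF_eq_0_if_nonneg_approx:
  fixes f :: "'a \<Rightarrow> real"
  assumes nonneg: "\<forall>x\<in>M. 0 \<le> f x" and approx: "\<forall>\<epsilon>>0. \<exists>x\<in>M. f x \<le> \<epsilon>"
  shows "(INF x\<in>M. f x) = 0"
proof (rule antisym)
  have "M \<noteq> {}" using approx[rule_format, of 1] by auto
  then show "0 \<le> (INF x\<in>M. f x)" using nonneg by (intro cINF_greatest) auto
  show "(INF x\<in>M. f x) \<le> 0"
  proof (rule field_le_epsilon)
    fix \<epsilon> :: real assume "0 < \<epsilon>"
    with approx obtain x where "x \<in> M" "f x \<le> \<epsilon>" by blast
    moreover have "bdd_below (f ` M)" using nonneg by (intro bdd_belowI[of _ 0]) auto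
    ultimately show "(INF x\<in>M. f x) \<le> 0 + \<epsilon>" by (simp add: cINF_lower2)
  qed
qed

lemma SUP_eq_0_if_nonpos_approx:
  fixes f :: "'a \<Rightarrow> real"
  assumes "\<forall>x\<in>M. f x \<le> 0" and "\<forall>\<epsilon>>0. \<exists>x\<in>M. - \<epsilon> \<le> f x"
  shows "(SUP x\<in>M. f x) = 0"
proof (rule antisym)
  have "M \<noteq> {}" using assms(2)[rule_format, of 1] by auto
  then show "(SUP x\<in>M. f x) \<le> 0" using assms(1) by (intro cSUP_least) auto
  show "0 \<le> (SUP x\<in>M. f x)"
  proof (rule field_le_epsilon)
    fix \<epsilon> :: real assume "0 < \<epsilon>"
    with assms(2) obtain x where "x \<in> M" "- \<epsilon> \<le> f x" by blast
    moreover have "bdd_above (f ` M)" using assms(1) by (intro bdd_aboveI[of _ 0]) auto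
    ultimately show "0 \<le> (SUP x\<in>M. f x) + \<epsilon>" using cSUP_upper2[of f M x "- \<epsilon>"] by simp
  qed
qed

text \<open>The involution \<open>\<rho>\<close> makes \<open>p F (\<rho> F) = 0\<close>, so each player can always reply with
  payoff 0, and it turns \<open>\<epsilon>\<close>-optimal strategies of the minimizer into \<open>\<epsilon>\<close>-optimal
  ones of the maximizer.\<close>
lemma symmetric_game_value_zero:
  fixes p :: "'m \<Rightarrow> 'm \<Rightarrow> real" and \<rho> :: "'m \<Rightarrow> 'm"
  assumes bounded: "\<forall>F\<in>M. \<forall>G\<in>M. \<bar>p F G\<bar> \<le> C"
    and involution: "\<forall>F\<in>M. \<rho> F \<in> M \<and> \<rho> (\<rho> F) = F"
    and skew: "\<forall>F\<in>M. \<forall>G\<in>M. p F (\<rho> G) = - p G (\<rho> F)"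
    and approx: "\<forall>\<epsilon>>0. \<exists>F\<in>M. \<forall>G\<in>M. p F G \<le> \<epsilon>"
  shows "(INF F\<in>M. SUP G\<in>M. p F G) = 0 \<and> (SUP G\<in>M. INF F\<in>M. p F G) = 0"
proof
  have "M \<noteq> {}" using approx[rule_format, of 1] by auto
  have diagonal: "p F (\<rho> F) = 0" if "F \<in> M" for F
    using skew[rule_format, OF that that] by linarith
  have bdd_above: "bdd_above ((\<lambda>G. p F G) ` M)" if "F \<in> M" for F
    using bounded that by (intro bdd_aboveI[of _ C]) (auto simp: abs_le_iff)
  have bdd_below: "bdd_below ((\<lambda>F. p F G) ` M)" if "G \<in> M" for G
    using bounded that by (intro bdd_belowI[of _ "- C"]) (auto simp: abs_le_iff minus_le_iff)
  show "(INF F\<in>M. SUP G\<in>M. p F G) = 0"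
  proof (rule INF_eq_0_if_nonneg_approx)
    show "\<forall>F\<in>M. 0 \<le> (SUP G\<in>M. p F G)"
    proof
      fix F assume F: "F \<in> M"
      with diagonal involution show "0 \<le> (SUP G\<in>M. p F G)"
        using cSUP_upper2[OF bdd_above[OF F], of "\<rho> F" 0] by simp
    qed
    show "\<forall>\<epsilon>>0. \<exists>F\<in>M. (SUP G\<in>M. p F G) \<le> \<epsilon>"
    proof (intro allI impI)
      fix \<epsilon> :: real assume "0 < \<epsilon>"
      with approx obtain F where "F \<in> M" "\<forall>G\<in>M. p F G \<le> \<epsilon>" by blast
      with \<open>M \<noteq> {}\<close> show "\<exists>F\<in>M. (SUP G\<in>M. p F G) \<le> \<epsilon>"
        by (blast intro: cSUP_least)
    qed
  qed
  show "(SUP G\<in>M. INF F\<in>M. p F G) = 0"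
  proof (rule SUP_eq_0_if_nonpos_approx)
    show "\<forall>G\<in>M. (INF F\<in>M. p F G) \<le> 0"
    proof
      fix G assume "G \<in> M"
      with diagonal involution have "p (\<rho> G) G = 0" by metis
      with \<open>G \<in> M\<close> involution show "(INF F\<in>M. p F G) \<le> 0"
        using cINF_lower2[OF bdd_below[OF \<open>G \<in> M\<close>], of "\<rho> G" 0] by simp
    qed
    show "\<forall>\<epsilon>>0. \<exists>G\<in>M. - \<epsilon> \<le> (INF F\<in>M. p F G)"
    proof (intro allI impI)
      fix \<epsilon> :: real assume "0 < \<epsilon>"
      with approx obtain F0 where F0: "F0 \<in> M" "\<forall>G\<in>M. p F0 G \<le> \<epsilon>" by blast
      have "- \<epsilon> \<le> p F (\<rho> F0)" if "F \<in> M" for F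
        using skew[rule_format, OF that F0(1)] F0(2) involution that by fastforce
      then have "- \<epsilon> \<le> (INF F\<in>M. p F (\<rho> F0))"
        using \<open>M \<noteq> {}\<close> by (intro cINF_greatest) auto
      with F0 involution show "\<exists>G\<in>M. - \<epsilon> \<le> (INF F\<in>M. p F G)" by blast
    qed
  qed
qed

theorem skew_kernel_game_value_zero:
  fixes K :: "real \<times> real \<Rightarrow> real \<times> real \<Rightarrow> real"
  assumes cont: "continuous_on UNIV (case_prod K)" and cS: "compact S" and "S \<noteq> {}"
    and sym: "uminus ` S = S" and skew: "\<forall>a\<in>S. \<forall>b\<in>S. K (-b) (-a) = - K a b"
  shows "(INF F\<in>mixed_strategies S. SUP G\<in>mixed_strategies S. mixed_extension K F G) = 0
       \<and> (SUP G\<in>mixed_strategies S. INF F\<in>mixed_strategies S. mixed_extension K F G) = 0"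
proof -
  have "compact (case_prod K ` (S \<times> S))"
    by (intro compact_continuous_image continuous_on_subset[OF cont subset_UNIV] compact_Times cS)
  then obtain C where C: "\<forall>a\<in>S. \<forall>b\<in>S. \<bar>K a b\<bar> \<le> C"
    by (fastforce dest: compact_imp_bounded simp: bounded_real)
  show ?thesis
  proof (rule symmetric_game_value_zero[where C=C])
    show "\<forall>F\<in>mixed_strategies S. \<forall>G\<in>mixed_strategies S. \<bar>mixed_extension K F G\<bar> \<le> C"
    proof (intro ballI)
      fix F G assume F: "F \<in> mixed_strategies S" and G: "G \<in> mixed_strategies S"
      interpret F: prob_space F using F by (simp add: mixed_strategies_def)
      interpret G: prob_space G using G by (simp add: mixed_strategies_def)
      show "\<bar>mixed_extension K F G\<bar> \<le> C"
        unfolding mixed_extension_def using C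
        by (intro G.abs_integral_le_bound ballI F.abs_integral_le_bound)
          (simp_all add: space_mixed_strategy[OF F] space_mixed_strategy[OF G])
    qed
    show "\<forall>F\<in>mixed_strategies S. reflect_strategy S F \<in> mixed_strategies S
        \<and> reflect_strategy S (reflect_strategy S F) = F"
      using reflect_strategy_mixed reflect_strategy_involution sym by blast
    show "\<forall>F\<in>mixed_strategies S. \<forall>G\<in>mixed_strategies S.
        mixed_extension K F (reflect_strategy S G) = - mixed_extension K G (reflect_strategy S F)"
      using mixed_extension_reflect_skew[OF _ _ sym cont skew C] by blast
    show "\<forall>\<epsilon>>0. \<exists>F\<in>mixed_strategies S. \<forall>G\<in>mixed_strategies S. mixed_extension K F G \<le> \<epsilon>"
    proof (intro allI impI)
      fix \<epsilon> :: real assume "0 < \<epsilon>"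
      then obtain F where "F \<in> mixed_strategies S"
        "\<forall>G\<in>mixed_strategies S. mixed_extension K F G \<le> \<epsilon>"
        by (rule skew_game_eps_optimal_mixed_strategy[OF assms])
      then show "\<exists>F\<in>mixed_strategies S. \<forall>G\<in>mixed_strategies S. mixed_extension K F G \<le> \<epsilon>"
        by blast
    qed
  qed
qed

section \<open>The Voronoi game under a bivariate normal law\<close>

text \<open>Conditioning on the second coordinate: \<open>\<xi>\<close> given \<open>\<eta> = y\<close> is normal with mean
  \<open>r sx y / sy\<close> and variance \<open>sx\<^sup>2 (1 - r\<^sup>2)\<close>.\<close>
lemma binorm_density_factor:
  assumes sx: "sx > 0" and sy: "sy > 0" and "-1 < r" "r < 1"
  shows "binorm_density sx sy r (x, y) =
     normal_density (r * sx * y / sy) (sx * sqrt (1 - r\<^sup>2)) x * normal_density 0 sy y"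
proof -
  define q where "q = sqrt (1 - r\<^sup>2)"
  have r2: "r\<^sup>2 < 1" using assms by (simp add: abs_square_less_1)
  have q: "q > 0" "q\<^sup>2 = 1 - r\<^sup>2" using r2 by (auto simp: q_def)
  have sqrt1: "sqrt (2 * pi * (sx * q)\<^sup>2) = sqrt (2 * pi) * sx * q"
    using sx q by (simp add: real_sqrt_mult power_mult_distrib q_def)
  have sqrt2: "sqrt (2 * pi * sy\<^sup>2) = sqrt (2 * pi) * sy"
    using sy by (simp add: real_sqrt_mult)
  have exponent: "- (x - r * sx * y / sy)\<^sup>2 / (2 * (sx * q)\<^sup>2) + - (y - 0)\<^sup>2 / (2 * sy\<^sup>2)
      = - (x\<^sup>2 / sx\<^sup>2 - 2 * r * x * y / (sx * sy) + y\<^sup>2 / sy\<^sup>2) / (2 * (1 - r\<^sup>2))"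
  proof -
    have e: "(sx * q)\<^sup>2 = sx\<^sup>2 * (1 - r\<^sup>2)" using q by (simp add: power_mult_distrib)
    have "1 - r\<^sup>2 \<noteq> 0" using r2 by simp
    then show ?thesis unfolding e using sx sy by (simp add: field_simps power2_eq_square)
  qed
  have "1 / (sqrt (2 * pi) * sx * q) * exp a * (1 / (sqrt (2 * pi) * sy) * exp b)
      = exp (a + b) / (2 * pi * sx * sy * q)" for a b
  proof -
    have "sqrt (2 * pi) * sqrt (2 * pi) = 2 * pi" by simp
    then show ?thesis using sx sy q by (simp add: exp_add field_simps)
  qed
  then show ?thesis
    unfolding binorm_density_def normal_density_def q_def[symmetric] sqrt1 sqrt2
    by (simp only: exponent split)
qed

lemma borel_measurable_binorm_density_pair[measurable]:
  "binorm_density sx sy r \<in> borel_measurable (borel \<Otimes>\<^sub>M borel)"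
  unfolding binorm_density_def by measurable

lemma borel_measurable_binorm_density[measurable]: "binorm_density sx sy r \<in> borel_measurable borel"
  using borel_measurable_binorm_density_pair by (simp add: borel_prod)

lemma sets_binorm[simp, measurable_cong]: "sets (binorm sx sy r) = sets borel"
  by (simp add: binorm_def)

lemma space_binorm[simp]: "space (binorm sx sy r) = UNIV"
  by (simp add: binorm_def)

lemma prob_space_binorm:
  assumes "sx > 0" "sy > 0" "-1 < r" "r < 1"
  shows "prob_space (binorm sx sy r)"
proof
  define s where "s = sx * sqrt (1 - r\<^sup>2)"
  have normal: "(\<integral>\<^sup>+x. ennreal (normal_density m \<sigma> x) \<partial>lborel) = 1" if "\<sigma> > 0" for m \<sigma>
    using prob_space.emeasure_space_1[OF prob_space_normal_density[OF that]]
    by (simp add: emeasure_density)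
  have "s > 0" using assms by (simp add: s_def abs_square_less_1)
  have "emeasure (binorm sx sy r) (space (binorm sx sy r))
      = (\<integral>\<^sup>+z. ennreal (binorm_density sx sy r z) \<partial>(lborel \<Otimes>\<^sub>M lborel))"
    by (simp add: binorm_def emeasure_density lborel_prod)
  also have "\<dots> = (\<integral>\<^sup>+y. (\<integral>\<^sup>+x. ennreal (binorm_density sx sy r (x, y)) \<partial>lborel) \<partial>lborel)"
    by (rule pair_sigma_finite.nn_integral_snd[symmetric]) (unfold_locales, measurable)
  also have "\<dots> = (\<integral>\<^sup>+y. ennreal (normal_density 0 sy y) \<partial>lborel)"
  proof (rule nn_integral_cong)
    fix y :: real
    have "(\<integral>\<^sup>+x. ennreal (binorm_density sx sy r (x, y)) \<partial>lborel)
        = (\<integral>\<^sup>+x. ennreal (normal_density (r * sx * y / sy) s x) * ennreal (normal_density 0 sy y) \<partial>lborel)"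
      using assms by (intro nn_integral_cong) (simp add: binorm_density_factor s_def ennreal_mult)
    also have "\<dots> = ennreal (normal_density 0 sy y)"
      by (subst nn_integral_multc) (simp_all add: normal \<open>s > 0\<close>)
    finally show "(\<integral>\<^sup>+x. ennreal (binorm_density sx sy r (x, y)) \<partial>lborel) = ennreal (normal_density 0 sy y)" .
  qed
  also have "\<dots> = 1" using assms by (simp add: normal)
  finally show "emeasure (binorm sx sy r) (space (binorm sx sy r)) = 1" .
qed

lemma binorm_density_uminus: "binorm_density sx sy r (- z) = binorm_density sx sy r z"
  by (cases z) (simp add: binorm_density_def)

lemma distr_lborel_uminus: "distr lborel borel uminus = (lborel :: 'a::euclidean_space measure)"
proof -
  have "(lborel :: 'a measure)
      = density (distr lborel borel (\<lambda>x. 0 + (-1::real) *\<^sub>R x)) (\<lambda>_. \<bar>-1::real\<bar> ^ DIM('a))"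
    by (rule lborel_affine) simp
  then show ?thesis by (simp add: density_1)
qed

lemma emeasure_binorm_uminus:
  assumes A: "A \<in> sets borel"
  shows "emeasure (binorm sx sy r) (uminus -` A) = emeasure (binorm sx sy r) A"
proof -
  have "(uminus :: real \<times> real \<Rightarrow> _) \<in> borel_measurable borel"
    by (intro borel_measurable_continuous_onI continuous_intros)
  from measurable_sets[OF this A] have "uminus -` A \<in> sets borel" by simp
  then have "emeasure (binorm sx sy r) (uminus -` A)
      = (\<integral>\<^sup>+z. ennreal (binorm_density sx sy r z) * indicator (uminus -` A) z \<partial>lborel)"
    by (simp add: binorm_def emeasure_density)
  also have "\<dots> = (\<integral>\<^sup>+z. ennreal (binorm_density sx sy r (- z)) * indicator A (- z) \<partial>lborel)"
    by (simp add: binorm_density_uminus indicator_def)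
  also have "\<dots> = (\<integral>\<^sup>+z. ennreal (binorm_density sx sy r z) * indicator A z \<partial>distr lborel borel uminus)"
    using A by (subst nn_integral_distr) auto
  also have "\<dots> = emeasure (binorm sx sy r) A"
    using A by (simp add: distr_lborel_uminus binorm_def emeasure_density)
  finally show ?thesis .
qed

definition bisector :: "real \<times> real \<Rightarrow> real \<times> real \<Rightarrow> (real \<times> real) set" where
  "bisector a b = {z. (fst a - fst z)\<^sup>2 + (snd a - snd z)\<^sup>2 = (fst b - fst z)\<^sup>2 + (snd b - snd z)\<^sup>2}"

lemma bisector_hyperplane:
  "bisector a b = {z. (2 *\<^sub>R (b - a)) \<bullet> z = (fst b)\<^sup>2 + (snd b)\<^sup>2 - (fst a)\<^sup>2 - (snd a)\<^sup>2}"
  unfolding bisector_def by (auto simp: inner_prod_def power2_eq_square algebra_simps)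

lemma bisector_null_sets_binorm:
  assumes "a \<noteq> b" shows "bisector a b \<in> null_sets (binorm sx sy r)"
proof -
  have "negligible (bisector a b)"
    unfolding bisector_hyperplane using assms by (intro negligible_hyperplane) simp
  moreover have "bisector a b \<in> sets borel" unfolding bisector_def
    by (intro borel_closed closed_Collect_eq continuous_intros)
  ultimately have null: "bisector a b \<in> null_sets lborel"
    using null_sets_completion_iff[of "bisector a b" lborel] by (simp add: negligible_iff_null_sets)
  have "AE z in lborel. z \<in> bisector a b \<longrightarrow> ennreal (binorm_density sx sy r z) = 0"
    using AE_not_in[OF null] by (rule AE_mp) simp
  with null show ?thesis
    unfolding binorm_def by (subst null_sets_density_iff) (auto simp: borel_prod[symmetric])
qed

lemma cell1_eq: "cell1 a b = {z. (fst a - fst z)\<^sup>2 + (snd a - snd z)\<^sup>2 < (fst b - fst z)\<^sup>2 + (snd b - snd z)\<^sup>2}"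
  unfolding cell1_def by auto

lemma cell2_eq: "cell2 a b = {z. (fst a - fst z)\<^sup>2 + (snd a - snd z)\<^sup>2 > (fst b - fst z)\<^sup>2 + (snd b - snd z)\<^sup>2}"
  unfolding cell2_def by auto

lemma cell1_sets[measurable]: "cell1 a b \<in> sets borel"
  unfolding cell1_eq by (intro borel_open open_Collect_less continuous_intros)

lemma cell2_sets[measurable]: "cell2 a b \<in> sets borel"
  unfolding cell2_eq by (intro borel_open open_Collect_less continuous_intros)

lemma cell2_uminus: "cell2 a b = uminus -` cell1 (- b) (- a)"
  unfolding cell1_def cell2_def by (auto simp: power2_eq_square algebra_simps)

lemma measure_cell1_cell2:
  assumes "sx > 0" "sy > 0" "-1 < r" "r < 1" "a \<noteq> b"
  shows "measure (binorm sx sy r) (cell1 a b) + measure (binorm sx sy r) (cell2 a b) = 1"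
proof -
  interpret prob_space "binorm sx sy r" by (rule prob_space_binorm[OF assms(1-4)])
  have "cell1 a b \<union> cell2 a b \<union> bisector a b = UNIV"
    unfolding cell1_eq cell2_eq bisector_def by auto
  then have "1 = prob (cell1 a b \<union> cell2 a b \<union> bisector a b)"
    using prob_space by simp
  also have "\<dots> = prob (cell1 a b \<union> cell2 a b)"
    by (rule measure_Un_null_set) (simp_all add: bisector_null_sets_binorm[OF assms(5)])
  also have "\<dots> = prob (cell1 a b) + prob (cell2 a b)"
    by (rule finite_measure_Union) (simp, simp, auto simp: cell1_eq cell2_eq)
  finally show ?thesis by simp
qed

lemma payoff_eq:
  assumes "sx > 0" "sy > 0" "-1 < r" "r < 1"
  shows "payoff sx sy r a b = (fst b + snd b)
    + ((fst a + snd a) - (fst b + snd b)) * measure (binorm sx sy r) (cell1 a b)"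
proof (cases "a = b")
  case False
  have cell2: "measure (binorm sx sy r) (cell2 a b) = 1 - measure (binorm sx sy r) (cell1 a b)"
    using measure_cell1_cell2[OF assms False] by simp
  show ?thesis using False unfolding payoff_def cell2 by (simp add: algebra_simps)
qed (simp add: payoff_def)

lemma payoff_skew: "payoff sx sy r (- b) (- a) = - payoff sx sy r a b"
proof (cases "a = b")
  case False
  have "measure (binorm sx sy r) (cell1 (- b) (- a)) = measure (binorm sx sy r) (cell2 a b)"
       "measure (binorm sx sy r) (cell2 (- b) (- a)) = measure (binorm sx sy r) (cell1 a b)"
    using cell2_uminus[of a b] cell2_uminus[of "- b" "- a"]
    by (simp_all add: measure_def emeasure_binorm_uminus)
  with False show ?thesis by (simp add: payoff_def algebra_simps)
qed (simp add: payoff_def)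

lemma tendsto_indicator_cell1:
  assumes u: "u \<longlonglongrightarrow> (a, b)" and z: "z \<notin> bisector a b"
  shows "(\<lambda>n. indicator (cell1 (fst (u n)) (snd (u n))) z :: real) \<longlonglongrightarrow> indicator (cell1 a b) z"
proof -
  define g where "g q = (fst (fst q) - fst z)\<^sup>2 + (snd (fst q) - snd z)\<^sup>2
      - ((fst (snd q) - fst z)\<^sup>2 + (snd (snd q) - snd z)\<^sup>2)" for q :: "(real \<times> real) \<times> (real \<times> real)"
  have cell: "indicator (cell1 (fst q) (snd q)) z = (if g q < 0 then 1 else 0 :: real)" for q
    unfolding cell1_eq g_def by (simp add: indicator_def)
  have lim: "(\<lambda>n. g (u n)) \<longlonglongrightarrow> g (a, b)"
    unfolding g_def by (intro tendsto_intros u)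
  have "g (a, b) \<noteq> 0" using z unfolding bisector_def g_def by auto
  then have "eventually (\<lambda>n. (g (u n) < 0) = (g (a, b) < 0)) sequentially"
  proof (cases "g (a, b) < 0")
    case True
    from order_tendstoD(2)[OF lim True] show ?thesis by (rule eventually_mono) (simp add: True)
  next
    case False
    with \<open>g (a, b) \<noteq> 0\<close> have "0 < g (a, b)" by simp
    from order_tendstoD(1)[OF lim this] show ?thesis by (rule eventually_mono) (simp add: False)
  qed
  then have "eventually (\<lambda>n. indicator (cell1 (fst (u n)) (snd (u n))) z = (indicator (cell1 a b) z :: real)) sequentially"
    by (rule eventually_mono) (simp add: cell[of "u _"] cell[of "(a, b)", simplified])
  then show ?thesis by (rule tendsto_eventually)
qed

text \<open>Moving the two points changes the cell only near their bisector, a null set of the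
  absolutely continuous law, so dominated convergence applies.\<close>
lemma isCont_measure_cell1:
  assumes "sx > 0" "sy > 0" "-1 < r" "r < 1" and "a \<noteq> b"
  shows "isCont (\<lambda>p. measure (binorm sx sy r) (cell1 (fst p) (snd p))) (a, b)"
proof (rule continuous_at_sequentiallyI)
  interpret prob_space "binorm sx sy r" by (rule prob_space_binorm[OF assms(1-4)])
  fix u assume u: "u \<longlonglongrightarrow> (a, b)"
  have "(\<lambda>n. \<integral>z. indicator (cell1 (fst (u n)) (snd (u n))) z \<partial>binorm sx sy r)
      \<longlonglongrightarrow> (\<integral>z. indicator (cell1 a b) z \<partial>binorm sx sy r :: real)"
  proof (rule integral_dominated_convergence[where w="\<lambda>_. 1"])
    show "AE z in binorm sx sy r. (\<lambda>n. indicator (cell1 (fst (u n)) (snd (u n))) z :: real)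
        \<longlonglongrightarrow> indicator (cell1 a b) z"
      using AE_not_in[OF bisector_null_sets_binorm[OF assms(5)]]
      by (rule AE_mp) (auto intro: tendsto_indicator_cell1[OF u])
  qed (auto simp: indicator_def)
  then show "(\<lambda>n. measure (binorm sx sy r) (cell1 (fst (u n)) (snd (u n))))
      \<longlonglongrightarrow> measure (binorm sx sy r) (cell1 (fst (a, b)) (snd (a, b)))"
    by simp
qed

lemma isCont_mult_vanishing_bounded:
  fixes h g :: "'a::t2_space \<Rightarrow> real"
  assumes h: "isCont h p" "h p = 0" and g: "\<forall>x. \<bar>g x\<bar> \<le> B"
  shows "isCont (\<lambda>x. h x * g x) p"
proof -
  have "((\<lambda>x. h x * g x) \<longlongrightarrow> 0) (at p)"
  proof (rule Lim_null_comparison)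
    show "\<forall>\<^sub>F x in at p. norm (h x * g x) \<le> B * \<bar>h x\<bar>"
      using g by (intro always_eventually allI) (simp add: abs_mult mult_right_mono mult.commute)
    have "((\<lambda>x. B * \<bar>h x\<bar>) \<longlongrightarrow> B * \<bar>h p\<bar>) (at p)"
      using h(1) unfolding isCont_def by (intro tendsto_intros)
    then show "((\<lambda>x. B * \<bar>h x\<bar>) \<longlongrightarrow> 0) (at p)" using h(2) by simp
  qed
  then show ?thesis unfolding isCont_def using h(2) by simp
qed

text \<open>Where the two points meet, the payoff difference that multiplies the discontinuous
  cell probability vanishes.\<close>
lemma continuous_payoff:
  assumes "sx > 0" "sy > 0" "-1 < r" "r < 1"
  shows "continuous_on UNIV (case_prod (payoff sx sy r))"
proof (rule continuous_at_imp_continuous_on, rule ballI)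
  fix p :: "(real \<times> real) \<times> (real \<times> real)"
  define h where "h q = (fst (fst q) + snd (fst q)) - (fst (snd q) + snd (snd q))" for q :: "(real \<times> real) \<times> (real \<times> real)"
  define m where "m q = measure (binorm sx sy r) (cell1 (fst q) (snd q))" for q
  have payoff: "case_prod (payoff sx sy r) = (\<lambda>q. (fst (snd q) + snd (snd q)) + h q * m q)"
    by (auto simp: fun_eq_iff payoff_eq[OF assms] h_def m_def)
  have "isCont h p" unfolding h_def by (intro continuous_intros)
  moreover have hm: "isCont (\<lambda>q. h q * m q) p"
  proof (cases "fst p = snd p")
    case True
    interpret prob_space "binorm sx sy r" by (rule prob_space_binorm[OF assms])
    have "\<forall>q. \<bar>m q\<bar> \<le> 1" by (simp add: m_def)
    with \<open>isCont h p\<close> True show ?thesis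
      by (intro isCont_mult_vanishing_bounded) (auto simp: h_def)
  next
    case False
    then have "isCont m p" unfolding m_def
      using isCont_measure_cell1[OF assms, of "fst p" "snd p"] by simp
    with \<open>isCont h p\<close> show ?thesis by (intro continuous_intros)
  qed
  ultimately show "isCont (case_prod (payoff sx sy r)) p"
    unfolding payoff by (intro isCont_add[OF _ hm] continuous_intros)
qed

theorem mainTheorem4:
  fixes sx sy r :: real and S :: "(real \<times> real) set"
  assumes "sx > 0" and "sy > 0" and "-1 < r" and "r < 1"
    and "S \<noteq> {}" and "compact S" and "S = uminus ` S"
  shows "(INF F1\<in>mixed_strategies S. SUP F2\<in>mixed_strategies S. mixed_payoff sx sy r F1 F2) = 0
       \<and> (SUP F2\<in>mixed_strategies S. INF F1\<in>mixed_strategies S. mixed_payoff sx sy r F1 F2) = 0"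
proof -
  have "mixed_payoff sx sy r = mixed_extension (payoff sx sy r)"
    by (simp add: fun_eq_iff mixed_payoff_def mixed_extension_def)
  moreover have "uminus ` S = S" using assms(7) by simp
  ultimately show ?thesis
    using skew_kernel_game_value_zero[OF continuous_payoff[OF assms(1-4)] assms(6,5)] payoff_skew
    by simp
qed

end
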